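(* Let $f:[0,1]^n\to[0,1]$ be continuous and polynomially bounded. Then there is an integer $t_0$ such that for every integer $t\ge t_0$, $$f(p)-\frac14\,\mathbb{P}_p\!\left[f(\bar X_t)\ge \tfrac12\right]\ \ge\ \frac18 f(p)\qquad\text{for all } p\in[0,1]^n.$$
   Context: For $p\in[0,1]^n$, let $X_1,X_2,\dots$ be i.i.d. random vectors in $\{0,1\}^n$ whose coordinates $X_{s,i}$ are independent Bernoulli($p_i$) variables, and let $\bar X_t=(X_1+\dots+X_t)/t\in[0,1]^n$; $\mathbb{P}_p$ denotes probability under this law. For a partition $[n]=A\sqcup S\sqcup B$, the open face is $F_{A,S,B}=\{p\in[0,1]^n: p_i=0\ (i\in A),\ 0<p_i<1\ (i\in S),\ p_i=1\ (i\in B)\}$. For $T\subseteq[n]$, $p^T=\prod_{i\in T}p_i$, $(1-p)^T=\prod_{i\in T}(1-p_i)$. A function $f:[0,1]^n\to[0,1]$ is polynomially bounded if there exist an integer $m\ge0$ and a real $c>0$ such that for every open face $F_{A,S,B}$ on which $f$ is not identically $0$, $f(p)\ge c\left((1-p)^A p^S(1-p)^S p^B\right)^m$ for all $p\in[0,1]^n$. *)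

theory Defs
  imports "HOL-Analysis.Analysis" "HOL-Probability.Probability"
begin

definition unit_cube :: "(real ^ 'n) set" where
  "unit_cube = {p. \<forall>i. 0 \<le> p $ i \<and> p $ i \<le> 1}"

definition bern_vec :: "real ^ 'n \<Rightarrow> ('n \<Rightarrow> bool) pmf" where
  "bern_vec p = Pi_pmf UNIV False (\<lambda>i. bernoulli_pmf (p $ i))"

text \<open>Joint law of X_1,...,X_t (indexed 0..t-1), i.i.d. with law bern_vec p.\<close>
definition sample_pmf :: "nat \<Rightarrow> real ^ 'n \<Rightarrow> (nat \<Rightarrow> 'n \<Rightarrow> bool) pmf" where
  "sample_pmf t p = Pi_pmf {..<t} (\<lambda>_. False) (\<lambda>_. bern_vec p)"

definition emp_mean :: "nat \<Rightarrow> (nat \<Rightarrow> 'n \<Rightarrow> bool) \<Rightarrow> real ^ 'n" where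
  "emp_mean t X = (\<chi> i. (\<Sum>s<t. of_bool (X s i)) / real t)"

definition is_partition3 :: "'n set \<Rightarrow> 'n set \<Rightarrow> 'n set \<Rightarrow> bool" where
  "is_partition3 A S B \<longleftrightarrow> A \<inter> S = {} \<and> A \<inter> B = {} \<and> S \<inter> B = {} \<and> A \<union> S \<union> B = UNIV"

definition open_face :: "'n set \<Rightarrow> 'n set \<Rightarrow> 'n set \<Rightarrow> (real ^ 'n) set" where
  "open_face A S B = {p. (\<forall>i\<in>A. p $ i = 0) \<and> (\<forall>i\<in>S. 0 < p $ i \<and> p $ i < 1) \<and> (\<forall>i\<in>B. p $ i = 1)}"

definition poly_bounded :: "(real ^ 'n \<Rightarrow> real) \<Rightarrow> bool" where
  "poly_bounded f \<longleftrightarrow> (\<exists>(m::nat) (c::real). c > 0 \<and>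
     (\<forall>A S B. is_partition3 A S B \<longrightarrow> (\<exists>q\<in>open_face A S B. f q \<noteq> 0) \<longrightarrow>
        (\<forall>p\<in>unit_cube. f p \<ge> c * ((\<Prod>i\<in>A. 1 - p $ i) * (\<Prod>i\<in>S. p $ i) *
                                        (\<Prod>i\<in>S. 1 - p $ i) * (\<Prod>i\<in>B. p $ i)) ^ m)))"

end

theory Submission
  imports Defs "HOL-Real_Asymp.Real_Asymp"
begin

text \<open>
  The coordinates of t times the empirical mean are independent binomial counts
  K i ~ Bin(t, p i). If f p \<ge> 1/3 there is nothing to prove; if f p < 1/3, uniform continuity
  shows that f (emp_mean t X) \<ge> 1/2 forces some coordinate of the empirical mean to deviate
  from p by a fixed \<delta>. Sort each count into one of three bands: fewer than k = 2m heads,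
  fewer than k tails, or neither. Rounding the empirical mean to 0 resp. 1 in the first two
  kinds of coordinates moves it by at most k/t per coordinate and lands in an open face on
  which f does not vanish, so polynomial boundedness gives f p \<ge> c * w p ^ m for the monomial
  w of that face. A band pattern has probability at most binom(t,k)^(2n) * w p ^ k; the
  geometric mean with the Hoeffding bound of the deviating coordinate bounds each of the
  3^n * n (pattern, coordinate) cells by binom(t,k)^(2n) * sqrt(2) * exp(-t \<delta>^2) * f p / c,
  which is o(f p) uniformly in p.
\<close>

lemma prob_coins_pattern:
  fixes q :: real
  assumes "finite I" "U \<subseteq> I" "V \<subseteq> I" "U \<inter> V = {}" "0 \<le> q" "q \<le> 1"
  shows "measure_pmf.prob (Pi_pmf I False (\<lambda>_. bernoulli_pmf q))
           {y. (\<forall>s\<in>U. y s) \<and> (\<forall>s\<in>V. \<not> y s)} = q ^ card U * (1 - q) ^ card V"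
proof -
  define B where "B s = (if s \<in> U then {True} else if s \<in> V then {False} else UNIV)" for s
  have "{y. (\<forall>s\<in>U. y s) \<and> (\<forall>s\<in>V. \<not> y s)} = Pi I B"
    using assms(2-4) by (auto simp: B_def Pi_def)
  then have "measure_pmf.prob (Pi_pmf I False (\<lambda>_. bernoulli_pmf q)) {y. (\<forall>s\<in>U. y s) \<and> (\<forall>s\<in>V. \<not> y s)}
      = (\<Prod>s\<in>I. measure_pmf.prob (bernoulli_pmf q) (B s))"
    using assms(1) by (simp add: measure_Pi_pmf_Pi)
  also have "\<dots> = (\<Prod>s\<in>I. if s \<in> U then q else if s \<in> V then 1 - q else 1)"
    using assms(5,6) by (intro prod.cong) (auto simp: B_def measure_pmf_single)
  also have "\<dots> = (\<Prod>s\<in>U. q) * (\<Prod>s\<in>V. 1 - q)"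
  proof -
    let ?g = "\<lambda>s. if s \<in> U then q else if s \<in> V then 1 - q else 1"
    have "prod ?g I = prod ?g (I - U) * prod ?g U"
      using assms(1,2) by (intro prod.subset_diff)
    also have "prod ?g (I - U) = prod ?g (I - U - V) * prod ?g V"
      using assms(1,3,4) by (intro prod.subset_diff) auto
    also have "prod ?g (I - U - V) = 1"
      by (rule prod.neutral) auto
    also have "prod ?g U = (\<Prod>s\<in>U. q)"
      by (rule prod.cong) auto
    also have "prod ?g V = (\<Prod>s\<in>V. 1 - q)"
      using assms(4) by (intro prod.cong) auto
    finally show ?thesis by simp
  qed
  finally show ?thesis by simp
qed

lemma heads_tails_subset_patterns:
  "{y. a \<le> card {s\<in>{..<t}. y s} \<and> b \<le> t - card {s\<in>{..<t}. y s}}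
     \<subseteq> (\<Union>(U, V)\<in>{U. U \<subseteq> {..<t} \<and> card U = a} \<times> {V. V \<subseteq> {..<t} \<and> card V = b}.
          {y. (\<forall>s\<in>U. y s) \<and> (\<forall>s\<in>V. \<not> y s)})"
proof safe
  fix y assume heads: "a \<le> card {s\<in>{..<t}. y s}" and tails: "b \<le> t - card {s\<in>{..<t}. y s}"
  have "card {s\<in>{..<t}. \<not> y s} = card ({..<t} - {s\<in>{..<t}. y s})"
    by (rule arg_cong[where f = card]) auto
  also have "\<dots> = t - card {s\<in>{..<t}. y s}"
    by (subst card_Diff_subset) auto
  finally have "b \<le> card {s\<in>{..<t}. \<not> y s}"
    using tails by simp
  then obtain V where "V \<subseteq> {s\<in>{..<t}. \<not> y s}" "card V = b"
    by (meson obtain_subset_with_card_n)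
  moreover obtain U where "U \<subseteq> {s\<in>{..<t}. y s}" "card U = a"
    using heads by (meson obtain_subset_with_card_n)
  ultimately show "y \<in> (\<Union>(U, V)\<in>{U. U \<subseteq> {..<t} \<and> card U = a} \<times> {V. V \<subseteq> {..<t} \<and> card V = b}.
      {y. (\<forall>s\<in>U. y s) \<and> (\<forall>s\<in>V. \<not> y s)})"
    by (auto intro!: bexI[of _ "(U, V)"])
qed

lemma binomial_pmf_two_tails_le:
  assumes q: "0 \<le> q" "q \<le> 1"
  shows "measure_pmf.prob (binomial_pmf t q) {x. a \<le> x \<and> b \<le> t - x}
           \<le> real (t choose a) * real (t choose b) * (q ^ a * (1 - q) ^ b)"
proof -
  define coins where "coins = Pi_pmf {..<t} False (\<lambda>_. bernoulli_pmf q)"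
  define subsets where "subsets k = {U. U \<subseteq> {..<t} \<and> card U = k}" for k
  define pattern :: "nat set \<times> nat set \<Rightarrow> (nat \<Rightarrow> bool) set"
    where "pattern = (\<lambda>(U, V). {y. (\<forall>s\<in>U. y s) \<and> (\<forall>s\<in>V. \<not> y s)})"
  have "binomial_pmf t q = map_pmf (\<lambda>y. card {s\<in>{..<t}. y s}) coins"
    unfolding coins_def using q by (intro binomial_pmf_altdef') auto
  then have "measure_pmf.prob (binomial_pmf t q) {x. a \<le> x \<and> b \<le> t - x}
      = measure_pmf.prob coins {y. a \<le> card {s\<in>{..<t}. y s} \<and> b \<le> t - card {s\<in>{..<t}. y s}}"
    by simp
  also have "\<dots> \<le> measure_pmf.prob coins (\<Union>UV\<in>subsets a \<times> subsets b. pattern UV)"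
    unfolding subsets_def pattern_def
    by (rule measure_pmf.finite_measure_mono[OF heads_tails_subset_patterns]) simp
  also have "\<dots> \<le> (\<Sum>UV\<in>subsets a \<times> subsets b. measure_pmf.prob coins (pattern UV))"
    by (rule measure_pmf.finite_measure_subadditive_finite) (auto simp: subsets_def)
  also have "\<dots> \<le> real (card (subsets a \<times> subsets b)) * (q ^ a * (1 - q) ^ b)"
  proof (rule sum_bounded_above)
    fix UV assume "UV \<in> subsets a \<times> subsets b"
    then obtain U V where UV: "UV = (U, V)" "U \<subseteq> {..<t}" "card U = a" "V \<subseteq> {..<t}" "card V = b"
      by (auto simp: subsets_def)
    show "measure_pmf.prob coins (pattern UV) \<le> q ^ a * (1 - q) ^ b"
    proof (cases "U \<inter> V = {}")
      case True
      then show ?thesis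
        using UV q by (simp add: pattern_def coins_def prob_coins_pattern)
    next
      case False
      then have "pattern UV = {}"
        by (auto simp: UV pattern_def)
      then show ?thesis
        using q by simp
    qed
  qed
  also have "card (subsets a \<times> subsets b) = (t choose a) * (t choose b)"
    by (simp add: card_cartesian_product subsets_def n_subsets)
  finally show ?thesis
    by simp
qed

datatype band = Low | Middle | High

instance band :: finite
proof
  have "UNIV = {Low, Middle, High}" using band.exhaust by blast
  then show "finite (UNIV :: band set)" by (metis finite.emptyI finite.insertI)
qed

definition band_of :: "nat \<Rightarrow> nat \<Rightarrow> nat \<Rightarrow> band" where
  "band_of t k x = (if x < k then Low else if t - k < x then High else Middle)"

fun band_weight :: "band \<Rightarrow> real \<Rightarrow> real" where
  "band_weight Low q = 1 - q"
| "band_weight Middle q = q * (1 - q)"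
| "band_weight High q = q"

lemma band_weight_nonneg: "0 \<le> q \<Longrightarrow> q \<le> 1 \<Longrightarrow> 0 \<le> band_weight \<beta> q"
  by (cases \<beta>) auto

lemma band_weight_le_1: "0 \<le> q \<Longrightarrow> q \<le> 1 \<Longrightarrow> band_weight \<beta> q \<le> 1"
  by (cases \<beta>) (auto simp: mult_le_one)

lemma prob_band_le:
  assumes "2 * k \<le> t" "0 \<le> q" "q \<le> 1"
  shows "measure_pmf.prob (binomial_pmf t q) {x. band_of t k x = \<beta>}
           \<le> real (t choose k) ^ 2 * band_weight \<beta> q ^ k"
proof -
  have C: "1 \<le> real (t choose k)"
    using assms(1) by (simp add: Suc_leI zero_less_binomial_iff)
  obtain a b where
    tails: "{x. band_of t k x = \<beta>} \<subseteq> {x. a \<le> x \<and> b \<le> t - x}" and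
    choose: "real (t choose a) * real (t choose b) \<le> real (t choose k) ^ 2" and
    weight: "q ^ a * (1 - q) ^ b = band_weight \<beta> q ^ k"
  proof (cases \<beta>)
    case Low
    then show ?thesis
      using assms(1) C by (intro that[of 0 k]) (auto simp: band_of_def power2_eq_square split: if_splits)
  next
    case Middle
    then show ?thesis
      by (intro that[of k k]) (auto simp: band_of_def power2_eq_square power_mult_distrib split: if_splits)
  next
    case High
    then show ?thesis
      using assms(1) C by (intro that[of k 0]) (auto simp: band_of_def power2_eq_square split: if_splits)
  qed
  have "measure_pmf.prob (binomial_pmf t q) {x. band_of t k x = \<beta>}
      \<le> measure_pmf.prob (binomial_pmf t q) {x. a \<le> x \<and> b \<le> t - x}"
    using tails by (rule measure_pmf.finite_measure_mono) simp
  also have "\<dots> \<le> real (t choose a) * real (t choose b) * (q ^ a * (1 - q) ^ b)"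
    using assms(2,3) by (rule binomial_pmf_two_tails_le)
  also have "\<dots> \<le> real (t choose k) ^ 2 * band_weight \<beta> q ^ k"
    unfolding weight using choose assms(2,3)
    by (intro mult_right_mono zero_le_power band_weight_nonneg)
  finally show ?thesis .
qed

text \<open>An event contained in two others has probability at most the geometric mean of theirs.
  This halves the band exponent \<open>2 * m\<close> to \<open>m\<close> while keeping half of the Hoeffding decay.\<close>

lemma prob_band_deviation_le:
  assumes "4 * m \<le> t" "0 \<le> q" "q \<le> 1" "t > 0" "\<eta> \<ge> 0"
  shows "measure_pmf.prob (binomial_pmf t q) {x. band_of t (2 * m) x = \<beta> \<and> \<eta> \<le> \<bar>real x / t - q\<bar>}
           \<le> real (t choose (2 * m)) * band_weight \<beta> q ^ m * sqrt (2 * exp (-2 * real t * \<eta>\<^sup>2))"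
proof -
  interpret binomial_distribution t q
    using assms by unfold_locales auto
  let ?P = "measure_pmf.prob (binomial_pmf t q) {x. band_of t (2 * m) x = \<beta> \<and> \<eta> \<le> \<bar>real x / t - q\<bar>}"
  let ?C = "real (t choose (2 * m))" and ?w = "band_weight \<beta> q"
  have "?P \<le> measure_pmf.prob (binomial_pmf t q) {x. band_of t (2 * m) x = \<beta>}"
    by (rule measure_pmf.finite_measure_mono) auto
  also have "\<dots> \<le> ?C\<^sup>2 * ?w ^ (2 * m)"
    using assms by (intro prob_band_le) auto
  finally have band: "?P \<le> (?C * ?w ^ m)\<^sup>2"
    by (simp add: power_mult_distrib power_mult mult.commute)
  have "?P \<le> measure_pmf.prob (binomial_pmf t q) {x. \<eta> \<le> \<bar>real x / t - q\<bar>}"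
    by (rule measure_pmf.finite_measure_mono) auto
  also have "\<dots> \<le> 2 * exp (-2 * real t * \<eta>\<^sup>2)"
    using prob_abs_ge'[of \<eta>] assms by simp
  finally have deviation: "?P \<le> 2 * exp (-2 * real t * \<eta>\<^sup>2)" .
  have "?P = sqrt (?P * ?P)" by simp
  also have "\<dots> \<le> sqrt ((?C * ?w ^ m)\<^sup>2 * (2 * exp (-2 * real t * \<eta>\<^sup>2)))"
    using band deviation by (intro real_sqrt_le_mono mult_mono) auto
  also have "\<dots> = ?C * ?w ^ m * sqrt (2 * exp (-2 * real t * \<eta>\<^sup>2))"
    using assms(2,3) by (simp add: real_sqrt_mult band_weight_nonneg)
  finally show ?thesis .
qed

lemma prob_band_optional_deviation_le:
  assumes "4 * m \<le> t" "0 \<le> q" "q \<le> 1" "t > 0" "\<eta> \<ge> 0"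
  shows "measure_pmf.prob (binomial_pmf t q) {x. band_of t (2 * m) x = \<beta> \<and> (d \<longrightarrow> \<eta> \<le> \<bar>real x / t - q\<bar>)}
           \<le> real (t choose (2 * m)) ^ 2 * band_weight \<beta> q ^ m * (if d then sqrt (2 * exp (-2 * real t * \<eta>\<^sup>2)) else 1)"
proof -
  let ?C = "real (t choose (2 * m))" and ?w = "band_weight \<beta> q"
  have "1 \<le> ?C"
    using assms(1) by (simp add: Suc_leI zero_less_binomial_iff)
  then have C: "?C \<le> ?C\<^sup>2"
    using mult_left_mono[of 1 ?C ?C] by (simp add: power2_eq_square)
  show ?thesis
  proof (cases d)
    case True
    then have "measure_pmf.prob (binomial_pmf t q) {x. band_of t (2 * m) x = \<beta> \<and> (d \<longrightarrow> \<eta> \<le> \<bar>real x / t - q\<bar>)}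
        = measure_pmf.prob (binomial_pmf t q) {x. band_of t (2 * m) x = \<beta> \<and> \<eta> \<le> \<bar>real x / t - q\<bar>}"
      by simp
    also have "\<dots> \<le> ?C * ?w ^ m * sqrt (2 * exp (-2 * real t * \<eta>\<^sup>2))"
      using assms by (rule prob_band_deviation_le)
    also have "\<dots> \<le> ?C\<^sup>2 * ?w ^ m * sqrt (2 * exp (-2 * real t * \<eta>\<^sup>2))"
      using C assms(2,3) by (intro mult_right_mono) (auto simp: band_weight_nonneg)
    finally show ?thesis
      using True by simp
  next
    case False
    then have "measure_pmf.prob (binomial_pmf t q) {x. band_of t (2 * m) x = \<beta> \<and> (d \<longrightarrow> \<eta> \<le> \<bar>real x / t - q\<bar>)}
        = measure_pmf.prob (binomial_pmf t q) {x. band_of t (2 * m) x = \<beta>}"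
      by simp
    also have "\<dots> \<le> ?C\<^sup>2 * ?w ^ (2 * m)"
      using assms by (intro prob_band_le) auto
    also have "\<dots> \<le> ?C\<^sup>2 * ?w ^ m"
      using assms(2,3) by (intro mult_left_mono power_decreasing) (auto simp: band_weight_nonneg band_weight_le_1)
    finally show ?thesis
      using False by simp
  qed
qed

lemma pmf_Pi_pmf_Pi_pmf:
  assumes "finite I" "finite J"
  shows "pmf (Pi_pmf I (\<lambda>_. d) (\<lambda>i. Pi_pmf J d (M i))) X =
           (if \<forall>i j. X i j \<noteq> d \<longrightarrow> i \<in> I \<and> j \<in> J
            then \<Prod>i\<in>I. \<Prod>j\<in>J. pmf (M i j) (X i j) else 0)"
proof (cases "\<forall>i j. X i j \<noteq> d \<longrightarrow> i \<in> I \<and> j \<in> J")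
  case True
  then have "\<forall>i. i \<notin> I \<longrightarrow> X i = (\<lambda>_. d)" by auto
  with True show ?thesis
    using assms by (auto simp: pmf_Pi pmf_Pi' intro!: prod.cong)
next
  case False
  then obtain i j where ij: "X i j \<noteq> d" "i \<notin> I \<or> j \<notin> J" by blast
  show ?thesis
  proof (cases "i \<in> I")
    case True
    with ij assms have "pmf (Pi_pmf J d (M i)) (X i) = 0"
      by (intro pmf_Pi_outside) auto
    with True assms have "(\<Prod>i\<in>I. pmf (Pi_pmf J d (M i)) (X i)) = 0"
      by (intro prod_zero) auto
    with \<open>\<not> (\<forall>i j. X i j \<noteq> d \<longrightarrow> i \<in> I \<and> j \<in> J)\<close> show ?thesis
      by (subst pmf_Pi[OF assms(1)]) auto
  next
    case False
    with ij \<open>\<not> (\<forall>i j. X i j \<noteq> d \<longrightarrow> i \<in> I \<and> j \<in> J)\<close> assms show ?thesis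
      by (subst pmf_Pi_outside) (auto simp: fun_eq_iff)
  qed
qed

lemma Pi_pmf_transpose:
  assumes "finite I" "finite J"
  shows "map_pmf (\<lambda>X j i. X i j) (Pi_pmf I (\<lambda>_. d) (\<lambda>i. Pi_pmf J d (\<lambda>j. M i j)))
           = Pi_pmf J (\<lambda>_. d) (\<lambda>j. Pi_pmf I d (\<lambda>i. M i j))"
proof (rule pmf_eqI)
  fix Y
  have "inj (\<lambda>X j i. X i j)"
    by (rule injI) (metis ext)
  from pmf_map_inj'[OF this, of "Pi_pmf I (\<lambda>_. d) (\<lambda>i. Pi_pmf J d (\<lambda>j. M i j))" "\<lambda>i j. Y j i"]
  have "pmf (map_pmf (\<lambda>X j i. X i j) (Pi_pmf I (\<lambda>_. d) (\<lambda>i. Pi_pmf J d (\<lambda>j. M i j)))) Y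
      = pmf (Pi_pmf I (\<lambda>_. d) (\<lambda>i. Pi_pmf J d (\<lambda>j. M i j))) (\<lambda>i j. Y j i)"
    by simp
  then show "pmf (map_pmf (\<lambda>X j i. X i j) (Pi_pmf I (\<lambda>_. d) (\<lambda>i. Pi_pmf J d (\<lambda>j. M i j)))) Y
      = pmf (Pi_pmf J (\<lambda>_. d) (\<lambda>j. Pi_pmf I d (\<lambda>i. M i j))) Y"
    using assms by (auto simp: pmf_Pi_pmf_Pi_pmf intro: prod.swap)
qed

definition count_pmf :: "nat \<Rightarrow> real ^ 'n \<Rightarrow> ('n \<Rightarrow> nat) pmf" where
  "count_pmf t p = Pi_pmf UNIV 0 (\<lambda>i. binomial_pmf t (p $ i))"

definition counts :: "nat \<Rightarrow> (nat \<Rightarrow> 'n \<Rightarrow> bool) \<Rightarrow> 'n \<Rightarrow> nat" where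
  "counts t X i = card {s\<in>{..<t}. X s i}"

definition freq :: "nat \<Rightarrow> ('n \<Rightarrow> nat) \<Rightarrow> real ^ 'n" where
  "freq t K = (\<chi> i. real (K i) / real t)"

lemma emp_mean_eq_freq_counts: "emp_mean t X = freq t (counts t X)"
proof -
  have "(\<Sum>s<t. of_bool (X s i)) = real (card {s\<in>{..<t}. X s i})" for i
    by (simp add: of_bool_def sum.If_cases Int_def)
  then show ?thesis
    by (simp add: emp_mean_def freq_def counts_def)
qed

lemma map_sample_pmf_counts:
  assumes "p \<in> unit_cube"
  shows "map_pmf (counts t) (sample_pmf t p) = count_pmf t p"
proof -
  let ?heads = "\<lambda>y. card {s\<in>{..<t}. y s}"
  let ?coins = "\<lambda>i. Pi_pmf {..<t} False (\<lambda>_. bernoulli_pmf (p $ i))"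
  have "count_pmf t p = Pi_pmf UNIV 0 (\<lambda>i. map_pmf ?heads (?coins i))"
    unfolding count_pmf_def using assms
    by (intro Pi_pmf_cong refl binomial_pmf_altdef') (auto simp: unit_cube_def)
  also have "\<dots> = map_pmf (\<lambda>Y. ?heads \<circ> Y) (Pi_pmf UNIV (\<lambda>_. False) ?coins)"
    by (rule Pi_pmf_map) auto
  also have "Pi_pmf UNIV (\<lambda>_. False) ?coins = map_pmf (\<lambda>X i s. X s i) (sample_pmf t p)"
    unfolding sample_pmf_def bern_vec_def by (rule Pi_pmf_transpose[symmetric]) auto
  finally show ?thesis
    by (simp add: map_pmf_comp counts_def[abs_def] o_def)
qed

lemma prob_count_pmf_Pi:
  "measure_pmf.prob (count_pmf t p) {K. \<forall>i. K i \<in> B i}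
     = (\<Prod>i\<in>UNIV. measure_pmf.prob (binomial_pmf t (p $ i)) (B i))"
proof -
  have "{K. \<forall>i. K i \<in> B i} = Pi UNIV B" by (auto simp: Pi_def)
  then show ?thesis by (simp add: count_pmf_def measure_Pi_pmf_Pi)
qed

lemma set_pmf_count_pmf_le:
  assumes "p \<in> unit_cube" "K \<in> set_pmf (count_pmf t p)"
  shows "K i \<le> t"
proof -
  have "K i \<in> set_pmf (binomial_pmf t (p $ i))"
    using set_Pi_pmf_subset'[of UNIV 0 "\<lambda>i. binomial_pmf t (p $ i)"] assms(2)
    by (auto simp: count_pmf_def PiE_dflt_def)
  with assms(1) show ?thesis
    by (auto simp: unit_cube_def set_pmf_binomial_eq split: if_splits)
qed

lemma freq_in_unit_cube: "(\<And>i. K i \<le> t) \<Longrightarrow> freq t K \<in> unit_cube"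
  by (auto simp: unit_cube_def freq_def divide_le_eq_1)

definition deviation_cell :: "nat \<Rightarrow> nat \<Rightarrow> real ^ 'n \<Rightarrow> real \<Rightarrow> ('n \<Rightarrow> band) \<Rightarrow> 'n \<Rightarrow> ('n \<Rightarrow> nat) set"
  where "deviation_cell t k p \<eta> \<phi> j =
    {K. (\<forall>i. band_of t k (K i) = \<phi> i) \<and> \<eta> \<le> \<bar>freq t K $ j - p $ j\<bar>}"

lemma prob_deviation_cell_le:
  fixes p :: "real ^ 'n" and \<phi> :: "'n \<Rightarrow> band"
  assumes p: "p \<in> unit_cube" and "4 * m \<le> t" "t > 0" "\<eta> \<ge> 0"
  shows "measure_pmf.prob (count_pmf t p) (deviation_cell t (2 * m) p \<eta> \<phi> j)
         \<le> real (t choose (2 * m)) ^ (2 * CARD('n)) * (\<Prod>i\<in>UNIV. band_weight (\<phi> i) (p $ i)) ^ m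
             * sqrt (2 * exp (-2 * real t * \<eta>\<^sup>2))"
proof -
  let ?C = "real (t choose (2 * m))" and ?D = "sqrt (2 * exp (-2 * real t * \<eta>\<^sup>2))"
  define B where "B i = {x. band_of t (2 * m) x = \<phi> i \<and> (i = j \<longrightarrow> \<eta> \<le> \<bar>real x / t - p $ i\<bar>)}" for i
  have "deviation_cell t (2 * m) p \<eta> \<phi> j = {K. \<forall>i. K i \<in> B i}"
    by (auto simp: deviation_cell_def B_def freq_def)
  then have "measure_pmf.prob (count_pmf t p) (deviation_cell t (2 * m) p \<eta> \<phi> j)
      = (\<Prod>i\<in>UNIV. measure_pmf.prob (binomial_pmf t (p $ i)) (B i))"
    by (simp add: prob_count_pmf_Pi)
  also have "\<dots> \<le> (\<Prod>i\<in>UNIV. ?C\<^sup>2 * band_weight (\<phi> i) (p $ i) ^ m * (if i = j then ?D else 1))"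
    using p assms(2-4) unfolding B_def
    by (intro prod_mono conjI measure_nonneg prob_band_optional_deviation_le) (auto simp: unit_cube_def)
  also have "\<dots> = ?C ^ (2 * CARD('n)) * (\<Prod>i\<in>UNIV. band_weight (\<phi> i) (p $ i)) ^ m * ?D"
    by (simp add: prod.distrib prod_power_distrib power_mult prod.delta)
  finally show ?thesis .
qed

definition face_monomial :: "'n set \<Rightarrow> 'n set \<Rightarrow> 'n set \<Rightarrow> real ^ 'n \<Rightarrow> real" where
  "face_monomial A S B p = (\<Prod>i\<in>A. 1 - p $ i) * (\<Prod>i\<in>S. p $ i) * (\<Prod>i\<in>S. 1 - p $ i) * (\<Prod>i\<in>B. p $ i)"

definition poly_bounded_by :: "(real ^ 'n \<Rightarrow> real) \<Rightarrow> real \<Rightarrow> nat \<Rightarrow> bool" where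
  "poly_bounded_by f c m \<longleftrightarrow> (\<forall>A S B. is_partition3 A S B \<longrightarrow> (\<exists>q\<in>open_face A S B. f q \<noteq> 0) \<longrightarrow>
     (\<forall>p\<in>unit_cube. c * face_monomial A S B p ^ m \<le> f p))"

lemma poly_bounded_byD:
  "poly_bounded_by f c m \<Longrightarrow> is_partition3 A S B \<Longrightarrow> q \<in> open_face A S B \<Longrightarrow> f q \<noteq> 0 \<Longrightarrow>
     p \<in> unit_cube \<Longrightarrow> c * face_monomial A S B p ^ m \<le> f p"
  unfolding poly_bounded_by_def by blast

lemma face_monomial_bounds:
  assumes "p \<in> unit_cube"
  shows "0 \<le> face_monomial A S B p" "face_monomial A S B p \<le> 1"
proof -
  have "0 \<le> p $ i \<and> p $ i \<le> 1" for i
    using assms by (auto simp: unit_cube_def)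
  then show "0 \<le> face_monomial A S B p" "face_monomial A S B p \<le> 1"
    unfolding face_monomial_def by (auto intro!: mult_le_one prod_le_1 prod_nonneg mult_nonneg_nonneg)
qed

lemma poly_boundedE:
  assumes "poly_bounded f"
  obtains m c where "1 \<le> m" "0 < c" "poly_bounded_by f c m"
proof -
  from assms obtain m c where "0 < c" "poly_bounded_by f c m"
    unfolding poly_bounded_def poly_bounded_by_def face_monomial_def by blast
  moreover have "c * face_monomial A S B p ^ Suc m \<le> c * face_monomial A S B p ^ m" if "p \<in> unit_cube" for A S B p
    using face_monomial_bounds[OF that] \<open>0 < c\<close> by (intro mult_left_mono power_decreasing) auto
  ultimately have "poly_bounded_by f c (Suc m)"
    unfolding poly_bounded_by_def by (meson order_trans)
  with \<open>0 < c\<close> show ?thesis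
    by (intro that[of "Suc m" c]) auto
qed

lemma is_partition3_bands: "is_partition3 {i. \<phi> i = Low} {i. \<phi> i = Middle} {i. \<phi> i = High}"
  unfolding is_partition3_def by (auto intro: band.exhaust)

lemma face_monomial_bands:
  fixes p :: "real ^ 'n"
  shows "face_monomial {i. \<phi> i = Low} {i. \<phi> i = Middle} {i. \<phi> i = High} p
     = (\<Prod>i\<in>UNIV. band_weight (\<phi> i) (p $ i))"
proof -
  have restrict: "(\<Prod>i\<in>{i. P i}. h i) = (\<Prod>i\<in>UNIV. if P i then h i else 1)" for P and h :: "'n \<Rightarrow> real"
    using prod.inter_filter[of UNIV h P] by simp
  have "(if \<phi> i = Low then 1 - p $ i else 1) * (if \<phi> i = Middle then p $ i else 1) *
      (if \<phi> i = Middle then 1 - p $ i else 1) * (if \<phi> i = High then p $ i else 1)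
      = band_weight (\<phi> i) (p $ i)" for i
    by (cases "\<phi> i") auto
  then show ?thesis
    unfolding face_monomial_def restrict prod.distrib[symmetric] by simp
qed

definition round_to_face :: "('n \<Rightarrow> band) \<Rightarrow> real ^ 'n \<Rightarrow> real ^ 'n" where
  "round_to_face \<phi> x = (\<chi> i. case \<phi> i of Low \<Rightarrow> 0 | Middle \<Rightarrow> x $ i | High \<Rightarrow> 1)"

lemma round_to_face_in_unit_cube: "x \<in> unit_cube \<Longrightarrow> round_to_face \<phi> x \<in> unit_cube"
  by (auto simp: unit_cube_def round_to_face_def split: band.split)

lemma round_freq_in_open_face:
  assumes "1 \<le> k" "\<And>i. K i \<le> t"
  defines "\<phi> \<equiv> \<lambda>i. band_of t k (K i)"
  shows "round_to_face \<phi> (freq t K) \<in> open_face {i. \<phi> i = Low} {i. \<phi> i = Middle} {i. \<phi> i = High}"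
proof -
  have "0 < real (K i) / real t \<and> real (K i) / real t < 1" if "\<phi> i = Middle" for i
  proof -
    have "0 < K i" "K i < t"
      using that assms(1) assms(2)[of i] by (auto simp: \<phi>_def band_of_def split: if_splits)
    then show ?thesis
      by (simp add: divide_less_eq_1 zero_less_divide_iff)
  qed
  then show ?thesis
    by (auto simp: open_face_def round_to_face_def freq_def)
qed

lemma round_freq_close:
  assumes "K i \<le> t"
  shows "\<bar>round_to_face (\<lambda>i. band_of t k (K i)) (freq t K) $ i - freq t K $ i\<bar> \<le> real k / real t"
proof (cases "band_of t k (K i)")
  case Low
  then show ?thesis
    by (auto simp: round_to_face_def freq_def band_of_def divide_right_mono split: if_splits)
next
  case High
  then have "0 < K i" "real t - real (K i) \<le> real k"
    using assms by (auto simp: band_of_def split: if_splits)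
  moreover have "\<bar>1 - real (K i) / real t\<bar> = (real t - real (K i)) / real t"
    using \<open>0 < K i\<close> assms by (simp add: field_simps)
  ultimately show ?thesis
    using High by (simp add: round_to_face_def freq_def divide_right_mono)
qed (simp add: round_to_face_def)

definition coordinatewise_modulus :: "(real ^ 'n \<Rightarrow> 'a :: metric_space) \<Rightarrow> real \<Rightarrow> real \<Rightarrow> bool" where
  "coordinatewise_modulus f \<delta> \<epsilon> \<longleftrightarrow>
     (\<forall>x\<in>unit_cube. \<forall>y\<in>unit_cube. (\<forall>i. \<bar>x $ i - y $ i\<bar> \<le> \<delta>) \<longrightarrow> dist (f x) (f y) < \<epsilon>)"

lemma continuous_on_unit_cube_modulus:
  fixes f :: "real ^ 'n \<Rightarrow> 'a :: metric_space"
  assumes "continuous_on unit_cube f" "\<epsilon> > 0"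
  obtains \<delta> where "\<delta> > 0" "coordinatewise_modulus f \<delta> \<epsilon>"
proof -
  have "unit_cube = cbox (0 :: real ^ 'n) 1"
    by (auto simp: unit_cube_def mem_box_cart)
  then have "uniformly_continuous_on unit_cube f"
    using assms(1) compact_cbox[of "0 :: real ^ 'n" 1] by (auto intro: compact_uniformly_continuous)
  then obtain d where "d > 0" and d: "\<And>x y. x \<in> unit_cube \<Longrightarrow> y \<in> unit_cube \<Longrightarrow> dist x y < d \<Longrightarrow> dist (f x) (f y) < \<epsilon>"
    using assms(2) unfolding uniformly_continuous_on_def by (metis dist_commute)
  have "dist (f x) (f y) < \<epsilon>"
    if "x \<in> unit_cube" "y \<in> unit_cube" and close: "\<forall>i. \<bar>x $ i - y $ i\<bar> \<le> d / (2 * CARD('n))" for x y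
  proof -
    have "dist x y \<le> (\<Sum>i\<in>UNIV. \<bar>x $ i - y $ i\<bar>)"
      using norm_le_l1_cart[of "x - y"] by (simp add: dist_norm)
    also have "\<dots> \<le> (\<Sum>i\<in>(UNIV :: 'n set). d / (2 * CARD('n)))"
      by (rule sum_mono) (use close in auto)
    also have "\<dots> < d"
      using \<open>d > 0\<close> by simp
    finally show ?thesis
      using d that(1,2) by blast
  qed
  moreover have "d / (2 * CARD('n)) > 0"
    using \<open>d > 0\<close> by simp
  ultimately show ?thesis
    using that unfolding coordinatewise_modulus_def by blast
qed

lemma exists_coordinate_deviation:
  fixes f :: "real ^ 'n \<Rightarrow> real"
  assumes "coordinatewise_modulus f \<delta> \<epsilon>" "x \<in> unit_cube" "y \<in> unit_cube" "f y + \<epsilon> \<le> f x"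
  shows "\<exists>j. \<delta> \<le> \<bar>x $ j - y $ j\<bar>"
proof (rule ccontr)
  assume "\<not> ?thesis"
  then have "dist (f x) (f y) < \<epsilon>"
    using assms(1-3) unfolding coordinatewise_modulus_def by (meson less_imp_le not_le)
  with assms(4) show False
    by (auto simp: dist_real_def)
qed

lemma high_value_subset_deviation_cells:
  fixes f :: "real ^ 'n \<Rightarrow> real"
  assumes "coordinatewise_modulus f \<delta> \<epsilon>" "p \<in> unit_cube" "f p + \<epsilon> \<le> a"
  shows "{K. a \<le> f (freq t K)} \<inter> set_pmf (count_pmf t p) \<subseteq> (\<Union>(\<phi>, j)\<in>UNIV. deviation_cell t k p \<delta> \<phi> j)"
proof
  fix K assume "K \<in> {K. a \<le> f (freq t K)} \<inter> set_pmf (count_pmf t p)"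
  then have "freq t K \<in> unit_cube" "f p + \<epsilon> \<le> f (freq t K)"
    using set_pmf_count_pmf_le[OF assms(2)] assms(3) by (auto intro: freq_in_unit_cube)
  then obtain j where "\<delta> \<le> \<bar>freq t K $ j - p $ j\<bar>"
    using exists_coordinate_deviation[OF assms(1) _ assms(2)] by blast
  then show "K \<in> (\<Union>(\<phi>, j)\<in>UNIV. deviation_cell t k p \<delta> \<phi> j)"
    by (auto simp: deviation_cell_def intro!: exI[of _ "(\<lambda>i. band_of t k (K i), j)"])
qed

lemma poly_bounded_by_band_weights:
  fixes f :: "real ^ 'n \<Rightarrow> real" and K :: "'n \<Rightarrow> nat"
  assumes "poly_bounded_by f c m" "coordinatewise_modulus f \<delta> \<epsilon>"
    and "\<epsilon> \<le> f (freq t K)" "1 \<le> k" "real k \<le> \<delta> * real t" "\<And>i. K i \<le> t" "p \<in> unit_cube"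
  shows "c * (\<Prod>i\<in>UNIV. band_weight (band_of t k (K i)) (p $ i)) ^ m \<le> f p"
proof -
  define \<phi> where "\<phi> i = band_of t k (K i)" for i
  define q where "q = round_to_face \<phi> (freq t K)"
  have freq: "freq t K \<in> unit_cube"
    using assms(6) by (rule freq_in_unit_cube)
  then have q: "q \<in> unit_cube"
    unfolding q_def by (rule round_to_face_in_unit_cube)
  have "0 < t"
    using assms(4,5) by (cases t) auto
  have "\<bar>q $ i - freq t K $ i\<bar> \<le> \<delta>" for i
  proof -
    have "\<bar>q $ i - freq t K $ i\<bar> \<le> real k / real t"
      unfolding q_def \<phi>_def using assms(6) by (rule round_freq_close)
    also have "\<dots> \<le> \<delta>"
      using assms(5) \<open>0 < t\<close> by (simp add: divide_le_eq)
    finally show ?thesis .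
  qed
  then have "dist (f q) (f (freq t K)) < \<epsilon>"
    using assms(2) q freq unfolding coordinatewise_modulus_def by blast
  then have "f q \<noteq> 0"
    using assms(3) by (auto simp: dist_real_def)
  moreover have "q \<in> open_face {i. \<phi> i = Low} {i. \<phi> i = Middle} {i. \<phi> i = High}"
    unfolding q_def \<phi>_def using assms(4,6) by (rule round_freq_in_open_face)
  ultimately have "c * face_monomial {i. \<phi> i = Low} {i. \<phi> i = Middle} {i. \<phi> i = High} p ^ m \<le> f p"
    using assms(1,7) is_partition3_bands by (blast intro: poly_bounded_byD)
  then show ?thesis
    by (simp add: face_monomial_bands \<phi>_def)
qed

lemma prob_occupied_deviation_cell_le:
  fixes f :: "real ^ 'n \<Rightarrow> real"
  assumes "poly_bounded_by f c m" "coordinatewise_modulus f \<delta> \<epsilon>" "0 < c" "1 \<le> m"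
    and p: "p \<in> unit_cube" and "4 * m \<le> t" "real (2 * m) \<le> \<delta> * real t"
    and K: "K \<in> deviation_cell t (2 * m) p \<delta> \<phi> j" "K \<in> set_pmf (count_pmf t p)" "\<epsilon> \<le> f (freq t K)"
  shows "measure_pmf.prob (count_pmf t p) (deviation_cell t (2 * m) p \<delta> \<phi> j)
    \<le> real (t choose (2 * m)) ^ (2 * CARD('n)) * sqrt (2 * exp (-2 * real t * \<delta>\<^sup>2)) * (f p / c)"
proof -
  let ?M = "real (t choose (2 * m)) ^ (2 * CARD('n)) * sqrt (2 * exp (-2 * real t * \<delta>\<^sup>2))"
  have "0 < t"
    using assms(4,6) by linarith
  moreover have "0 < \<delta> * real t"
    using assms(4,7) by linarith
  ultimately have "0 \<le> \<delta>"
    by (simp add: zero_less_mult_iff)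
  have "c * (\<Prod>i\<in>UNIV. band_weight (band_of t (2 * m) (K i)) (p $ i)) ^ m \<le> f p"
    using assms(1,2,4,7) K(3) set_pmf_count_pmf_le[OF p K(2)] p by (intro poly_bounded_by_band_weights) auto
  moreover have "\<phi> = (\<lambda>i. band_of t (2 * m) (K i))"
    using K(1) by (auto simp: deviation_cell_def)
  ultimately have "(\<Prod>i\<in>UNIV. band_weight (\<phi> i) (p $ i)) ^ m \<le> f p / c"
    using assms(3) by (simp add: field_simps)
  then have "?M * (\<Prod>i\<in>UNIV. band_weight (\<phi> i) (p $ i)) ^ m \<le> ?M * (f p / c)"
    by (rule mult_left_mono) simp
  moreover have "measure_pmf.prob (count_pmf t p) (deviation_cell t (2 * m) p \<delta> \<phi> j)
      \<le> real (t choose (2 * m)) ^ (2 * CARD('n)) * (\<Prod>i\<in>UNIV. band_weight (\<phi> i) (p $ i)) ^ m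
        * sqrt (2 * exp (-2 * real t * \<delta>\<^sup>2))"
    using p assms(6) \<open>0 < t\<close> \<open>0 \<le> \<delta>\<close> by (rule prob_deviation_cell_le)
  ultimately show ?thesis
    by (simp add: algebra_simps)
qed

lemma prob_freq_value_ge_le:
  fixes f :: "real ^ 'n \<Rightarrow> real"
  assumes "poly_bounded_by f c m" "coordinatewise_modulus f \<delta> \<epsilon>" "0 < c" "1 \<le> m"
    and p: "p \<in> unit_cube" and "0 \<le> f p" "f p + \<epsilon> \<le> a"
    and "4 * m \<le> t" "real (2 * m) \<le> \<delta> * real t"
  shows "measure_pmf.prob (count_pmf t p) {K. a \<le> f (freq t K)}
    \<le> real CARD(('n \<Rightarrow> band) \<times> 'n) / c
        * (real (t choose (2 * m)) ^ (2 * CARD('n)) * sqrt (2 * exp (-2 * real t * \<delta>\<^sup>2))) * f p"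
proof -
  let ?M = "real (t choose (2 * m)) ^ (2 * CARD('n)) * sqrt (2 * exp (-2 * real t * \<delta>\<^sup>2))"
  let ?cell = "\<lambda>(\<phi>, j). deviation_cell t (2 * m) p \<delta> \<phi> j"
  define E where "E = {K. a \<le> f (freq t K)} \<inter> set_pmf (count_pmf t p)"
  have cover: "E \<subseteq> (\<Union>\<phi>j\<in>UNIV. E \<inter> ?cell \<phi>j)"
    using high_value_subset_deviation_cells[OF assms(2) p assms(7), of t "2 * m"] by (auto simp: E_def)
  have cell_le: "measure_pmf.prob (count_pmf t p) (E \<inter> ?cell \<phi>j) \<le> ?M * (f p / c)" for \<phi>j
  proof (cases "E \<inter> ?cell \<phi>j = {}")
    case True
    then show ?thesis
      using assms(3,6) by simp
  next
    case False
    obtain \<phi> j where \<phi>j: "\<phi>j = (\<phi>, j)"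
      by (cases \<phi>j)
    from False obtain K where K: "K \<in> E" "K \<in> deviation_cell t (2 * m) p \<delta> \<phi> j"
      unfolding \<phi>j by auto
    have "measure_pmf.prob (count_pmf t p) (E \<inter> ?cell \<phi>j)
        \<le> measure_pmf.prob (count_pmf t p) (deviation_cell t (2 * m) p \<delta> \<phi> j)"
      unfolding \<phi>j by (rule measure_pmf.finite_measure_mono) auto
    also have "\<dots> \<le> ?M * (f p / c)"
      using K assms(6,7)
      by (intro prob_occupied_deviation_cell_le[OF assms(1-4) p assms(8,9)]) (auto simp: E_def)
    finally show ?thesis .
  qed
  have "measure_pmf.prob (count_pmf t p) {K. a \<le> f (freq t K)} = measure_pmf.prob (count_pmf t p) E"
    by (simp add: E_def measure_Int_set_pmf)
  also have "\<dots> \<le> measure_pmf.prob (count_pmf t p) (\<Union>\<phi>j\<in>UNIV. E \<inter> ?cell \<phi>j)"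
    using cover by (rule measure_pmf.finite_measure_mono) simp
  also have "\<dots> \<le> (\<Sum>\<phi>j\<in>UNIV. measure_pmf.prob (count_pmf t p) (E \<inter> ?cell \<phi>j))"
    by (rule measure_pmf.finite_measure_subadditive_finite) auto
  also have "\<dots> \<le> real CARD(('n \<Rightarrow> band) \<times> 'n) * (?M * (f p / c))"
    using cell_le by (rule sum_bounded_above)
  finally show ?thesis
    by (simp add: field_simps)
qed

lemma prob_freq_ge_half_le:
  fixes f :: "real ^ 'n \<Rightarrow> real"
  assumes "poly_bounded_by f c m" "coordinatewise_modulus f \<delta> (1/6)" "0 < c" "1 \<le> m"
    and "p \<in> unit_cube" "0 \<le> f p" "4 * m \<le> t" "real (2 * m) \<le> \<delta> * real t"
    and small: "real CARD(('n \<Rightarrow> band) \<times> 'n) / c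
        * (real (t choose (2 * m)) ^ (2 * CARD('n)) * sqrt (2 * exp (-2 * real t * \<delta>\<^sup>2))) \<le> 1"
  shows "measure_pmf.prob (count_pmf t p) {K. 1/2 \<le> f (freq t K)} \<le> 3 * f p"
proof (cases "f p \<le> 1/3")
  case True
  then have "measure_pmf.prob (count_pmf t p) {K. 1/2 \<le> f (freq t K)}
      \<le> real CARD(('n \<Rightarrow> band) \<times> 'n) / c
        * (real (t choose (2 * m)) ^ (2 * CARD('n)) * sqrt (2 * exp (-2 * real t * \<delta>\<^sup>2))) * f p"
    using assms(5-8) by (intro prob_freq_value_ge_le[OF assms(1-4)]) auto
  also have "\<dots> \<le> 3 * f p"
    using small \<open>0 \<le> f p\<close> by (intro mult_right_mono) auto
  finally show ?thesis .
next
  case False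
  then show ?thesis
    using measure_pmf.prob_le_1[of "count_pmf t p" "{K. 1/2 \<le> f (freq t K)}"] by linarith
qed

lemma binomial_times_exp_tendsto_0:
  assumes "\<eta> > 0"
  shows "(\<lambda>t. real (t choose k) ^ N * sqrt (2 * exp (-2 * real t * \<eta>\<^sup>2))) \<longlonglongrightarrow> 0"
proof (rule tendsto_sandwich)
  show "eventually (\<lambda>t. 0 \<le> real (t choose k) ^ N * sqrt (2 * exp (-2 * real t * \<eta>\<^sup>2))) sequentially"
    by simp
  show "eventually (\<lambda>t. real (t choose k) ^ N * sqrt (2 * exp (-2 * real t * \<eta>\<^sup>2))
      \<le> real t ^ (k * N) * sqrt (2 * exp (-2 * real t * \<eta>\<^sup>2))) sequentially"
    using eventually_ge_at_top[of k]
  proof (rule eventually_mono)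
    fix t assume "k \<le> t"
    then have "real (t choose k) \<le> real t ^ k"
      by (metis binomial_le_pow of_nat_le_iff of_nat_power)
    then have "real (t choose k) ^ N \<le> real t ^ (k * N)"
      by (simp add: power_mult power_mono)
    then show "real (t choose k) ^ N * sqrt (2 * exp (-2 * real t * \<eta>\<^sup>2))
        \<le> real t ^ (k * N) * sqrt (2 * exp (-2 * real t * \<eta>\<^sup>2))"
      by (rule mult_right_mono) simp
  qed
  show "(\<lambda>t. real t ^ (k * N) * sqrt (2 * exp (-2 * real t * \<eta>\<^sup>2))) \<longlonglongrightarrow> 0"
    using assms by real_asymp
qed simp

lemma prob_sample_pmf_emp_mean:
  assumes "p \<in> unit_cube"
  shows "measure_pmf.prob (sample_pmf t p) {X. P (emp_mean t X)} = measure_pmf.prob (count_pmf t p) {K. P (freq t K)}"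
  by (simp flip: map_sample_pmf_counts[OF assms] add: vimage_def emp_mean_eq_freq_counts)

theorem lemma5:
  fixes f :: "real ^ 'n \<Rightarrow> real"
  assumes cont: "continuous_on unit_cube f"
    and range: "\<forall>p\<in>unit_cube. 0 \<le> f p \<and> f p \<le> 1"
    and pb: "poly_bounded f"
  shows "\<exists>t0::nat. \<forall>t\<ge>t0. \<forall>p\<in>unit_cube.
           f p - (1/4) * measure_pmf.prob (sample_pmf t p) {X. f (emp_mean t X) \<ge> 1/2}
             \<ge> (1/8) * f p"
proof -
  obtain m c where "1 \<le> m" "0 < c" "poly_bounded_by f c m"
    using poly_boundedE[OF pb] .
  obtain \<delta> where "\<delta> > 0" "coordinatewise_modulus f \<delta> (1/6)"
    using continuous_on_unit_cube_modulus[OF cont, of "1/6"] by auto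
  define M where "M t = real CARD(('n \<Rightarrow> band) \<times> 'n) / c
    * (real (t choose (2 * m)) ^ (2 * CARD('n)) * sqrt (2 * exp (-2 * real t * \<delta>\<^sup>2)))" for t
  have "M \<longlonglongrightarrow> 0"
    unfolding M_def using \<open>\<delta> > 0\<close> by (intro tendsto_mult_right_zero binomial_times_exp_tendsto_0)
  moreover have "filterlim (\<lambda>t. \<delta> * real t) at_top sequentially"
    using \<open>\<delta> > 0\<close> by real_asymp
  ultimately have "eventually (\<lambda>t. M t < 1 \<and> real (2 * m) \<le> \<delta> * real t \<and> 4 * m \<le> t) sequentially"
    by (intro eventually_conj order_tendstoD(2) eventually_ge_at_top) (auto simp: filterlim_at_top)
  then obtain t0 where t0: "\<And>t. t0 \<le> t \<Longrightarrow> M t < 1 \<and> real (2 * m) \<le> \<delta> * real t \<and> 4 * m \<le> t"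
    unfolding eventually_sequentially by blast
  show ?thesis
  proof (intro exI allI impI ballI)
    fix t and p :: "real ^ 'n"
    assume "t0 \<le> t" "p \<in> unit_cube"
    then have "measure_pmf.prob (count_pmf t p) {K. 1/2 \<le> f (freq t K)} \<le> 3 * f p"
      using t0[OF \<open>t0 \<le> t\<close>] range \<open>0 < c\<close> \<open>1 \<le> m\<close> unfolding M_def
      by (intro prob_freq_ge_half_le[OF \<open>poly_bounded_by f c m\<close> \<open>coordinatewise_modulus f \<delta> (1/6)\<close>]) auto
    then show "f p - 1/4 * measure_pmf.prob (sample_pmf t p) {X. f (emp_mean t X) \<ge> 1/2} \<ge> 1/8 * f p"
      using prob_sample_pmf_emp_mean[OF \<open>p \<in> unit_cube\<close>, of t "\<lambda>x. 1/2 \<le> f x"] range \<open>p \<in> unit_cube\<close>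
      by fastforce
  qed
qed

end
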